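(* For all integers $0<k \leq \ell < n$, the polynomial \[ \overline{ { n \brack k}}_{q,t} \overline{ { n \brack \ell }}_{q,t} - \overline{ { n-1 \brack k-1}}_{q,t} \overline{ { n+1 \brack \ell+1 }}_{q,t} \] has non-negative coefficients as a polynomial in $q$ and $t$.
   Context: An overpartition is a partition in which the last occurrence of each distinct part size may be overlined; its weight $|\lambda|$ is the sum of its parts. For integers $0\le b\le a$, $\overline{{a \brack b}}_{q,t}=\sum_{\lambda} t^{\#_o(\lambda)} q^{|\lambda|}$, the sum over all overpartitions $\lambda$ with largest part at most $a-b$ and at most $b$ parts, $\#_o(\lambda)$ being the number of overlined parts. *)

theory Defs
  imports "HOL-Library.Multiset" "HOL-Computational_Algebra.Polynomial"
begin

text \<open>An overpartition is represented as a pair (lam, S): lam is a multiset of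
positive parts (the underlying partition) and S is the set of distinct part sizes
whose last occurrence is overlined, so S is a subset of the set of part sizes.\<close>

definition overpartitions :: "nat \<Rightarrow> nat \<Rightarrow> (nat multiset \<times> nat set) set" where
  "overpartitions m b = {(lam, S). (\<forall>x\<in>#lam. 0 < x \<and> x \<le> m) \<and> size lam \<le> b
                                      \<and> S \<subseteq> set_mset lam}"

text \<open>Overpartition analogue of the Gaussian binomial, as a bivariate polynomial:
outer variable t, inner variable q (coefficient of t^j is a polynomial in q).\<close>

definition over_gauss :: "nat \<Rightarrow> nat \<Rightarrow> int poly poly" where
  "over_gauss a b = (\<Sum>(lam, S)\<in>overpartitions (a - b) b.
                         monom (monom 1 (sum_mset lam)) (card S))"

definition nonneg_coeffs2 :: "int poly poly \<Rightarrow> bool" where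
  "nonneg_coeffs2 P \<longleftrightarrow> (\<forall>i j. 0 \<le> coeff (coeff P i) j)"

end

theory Submission
  imports Defs
begin

text \<open>Let G m b be the generating function of overpartitions with parts at most m and at most
b parts, extended by 0 to negative b; the theorem compares G (n - k) with G (n - l). Splitting off
the c copies of the largest admissible part M = m + 1, whose last copy may or may not be overlined,
shows that G (m + 1) is the convolution of G m with the sequence w_M given by w_M 0 = 1 and
w_M c = (1 + t) q^(c M). All 2x2 minors of the Toeplitz matrix of w_M have nonnegative coefficients,
and by the Binet--Cauchy identity convolution with such a sequence preserves strong log-concavity,
so every G m is strongly log-concave. Convolution with the nonnegative sequences w_(b+1), ..., w_(b+d)
preserves the mixed inequality G (b + d) k * G b l >= G (b + d) (k - 1) * G b (l + 1) for k <= l;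
now take b = n - l and d = l - k.\<close>

lemma nonneg_coeffs2_0 [simp]: "nonneg_coeffs2 0"
  and nonneg_coeffs2_1 [simp]: "nonneg_coeffs2 1"
  by (auto simp: nonneg_coeffs2_def)

lemma nonneg_coeffs2_add:
  "nonneg_coeffs2 p \<Longrightarrow> nonneg_coeffs2 q \<Longrightarrow> nonneg_coeffs2 (p + q)"
  by (simp add: nonneg_coeffs2_def)

lemma nonneg_coeffs2_sum:
  "(\<And>x. x \<in> A \<Longrightarrow> nonneg_coeffs2 (f x)) \<Longrightarrow> nonneg_coeffs2 (\<Sum>x\<in>A. f x)"
  by (auto simp: nonneg_coeffs2_def coeff_sum intro!: sum_nonneg)

lemma nonneg_coeffs2_mult:
  assumes "nonneg_coeffs2 p" "nonneg_coeffs2 q"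
  shows "nonneg_coeffs2 (p * q)"
  using assms unfolding nonneg_coeffs2_def
  by (auto simp: coeff_mult coeff_sum intro!: sum_nonneg mult_nonneg_nonneg)

lemma nonneg_coeffs2_power: "nonneg_coeffs2 p \<Longrightarrow> nonneg_coeffs2 (p ^ n)"
  by (induction n) (simp_all add: nonneg_coeffs2_mult)

lemma nonneg_coeffs2_half: "nonneg_coeffs2 (2 * p) \<Longrightarrow> nonneg_coeffs2 p"
  unfolding nonneg_coeffs2_def mult_2 by (metis coeff_add linorder_not_le add_neg_neg)

definition q_var :: "int poly poly" where "q_var = [:[:0, 1:]:]"

definition t_var :: "int poly poly" where "t_var = [:0, 1:]"

lemma nonneg_coeffs2_q_var [simp]: "nonneg_coeffs2 q_var"
  and nonneg_coeffs2_t_var [simp]: "nonneg_coeffs2 t_var"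
  by (auto simp: nonneg_coeffs2_def q_var_def t_var_def coeff_pCons split: nat.split)

lemma monom_monom_eq_q_t_power: "monom (monom 1 a) j = q_var ^ a * t_var ^ j"
  by (simp add: q_var_def t_var_def poly_const_pow monom_altdef smult_monom)

definition zero_ext :: "(nat \<Rightarrow> 'a::zero) \<Rightarrow> int \<Rightarrow> 'a" where
  "zero_ext f i = (if i < 0 then 0 else f (nat i))"

definition seq_conv :: "(int \<Rightarrow> 'a::semiring_0) \<Rightarrow> (int \<Rightarrow> 'a) \<Rightarrow> int \<Rightarrow> 'a" where
  "seq_conv f w x = (\<Sum>i\<in>{0..x}. f i * w (x - i))"

lemma seq_conv_eq_sum:
  assumes "finite I" "{0..x} \<subseteq> I" "\<And>i. i < 0 \<Longrightarrow> f i = 0" "\<And>i. i < 0 \<Longrightarrow> w i = 0"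
  shows "seq_conv f w x = (\<Sum>i\<in>I. f i * w (x - i))"
  unfolding seq_conv_def by (rule sum.mono_neutral_left) (use assms in auto)

lemma seq_conv_zero_ext:
  fixes f w :: "nat \<Rightarrow> 'a::comm_semiring_0"
  shows "zero_ext (\<lambda>n. \<Sum>c\<le>n. w c * f (n - c)) = seq_conv (zero_ext f) (zero_ext w)"
proof
  fix x :: int
  show "zero_ext (\<lambda>n. \<Sum>c\<le>n. w c * f (n - c)) x = seq_conv (zero_ext f) (zero_ext w) x"
  proof (cases "x < 0")
    case False
    then have "zero_ext (\<lambda>n. \<Sum>c\<le>n. w c * f (n - c)) x = (\<Sum>c\<le>nat x. w c * f (nat x - c))"
      by (simp add: zero_ext_def)
    also have "\<dots> = (\<Sum>i\<in>{0..x}. zero_ext f i * zero_ext w (x - i))"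
      by (rule sum.reindex_bij_witness[where j = "\<lambda>c. x - int c" and i = "\<lambda>i. nat (x - i)"])
         (use False in \<open>auto simp: zero_ext_def nat_diff_distrib mult.commute\<close>)
    finally show ?thesis unfolding seq_conv_def .
  qed (simp add: zero_ext_def seq_conv_def)
qed

lemma seq_conv_eq_sum_reflected:
  assumes "x \<le> N" "\<And>i. i < 0 \<Longrightarrow> f i = 0" "\<And>i. i < 0 \<Longrightarrow> w i = 0"
  shows "seq_conv f w x = (\<Sum>c\<in>{0..N}. f (x - c) * w c)"
proof -
  have "seq_conv f w x = (\<Sum>i\<in>(\<lambda>c. x - c) ` {0..N}. f i * w (x - i))"
  proof (rule seq_conv_eq_sum)
    show "{0..x} \<subseteq> (\<lambda>c. x - c) ` {0..N}"
      using assms(1) by (auto intro!: image_eqI[where x = "x - i" for i])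
  qed (use assms in auto)
  also have "\<dots> = (\<Sum>c\<in>{0..N}. f (x - c) * w c)"
    by (subst sum.reindex) (auto simp: inj_on_def)
  finally show ?thesis .
qed

lemma binet_cauchy_double:
  fixes a b u v :: "'i \<Rightarrow> 'a::comm_ring_1"
  shows "2 * ((\<Sum>i\<in>I. a i * u i) * (\<Sum>i\<in>I. b i * v i)
              - (\<Sum>i\<in>I. b i * u i) * (\<Sum>i\<in>I. a i * v i))
       = (\<Sum>i\<in>I. \<Sum>j\<in>I. (a i * b j - a j * b i) * (u i * v j - u j * v i))"
proof -
  have "(\<Sum>i\<in>I. \<Sum>j\<in>I. (a i * b j - a j * b i) * (u i * v j - u j * v i))
      = (\<Sum>i\<in>I. a i * u i) * (\<Sum>j\<in>I. b j * v j)
        - (\<Sum>i\<in>I. a i * v i) * (\<Sum>j\<in>I. b j * u j)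
        - (\<Sum>i\<in>I. b i * u i) * (\<Sum>j\<in>I. a j * v j)
        + (\<Sum>i\<in>I. b i * v i) * (\<Sum>j\<in>I. a j * u j)"
    unfolding sum_product by (simp add: algebra_simps sum_subtractf sum.distrib)
  then show ?thesis
    by (simp add: algebra_simps)
qed

definition strongly_log_concave_pair ::
    "(int \<Rightarrow> int poly poly) \<Rightarrow> (int \<Rightarrow> int poly poly) \<Rightarrow> bool" where
  "strongly_log_concave_pair x y \<longleftrightarrow>
     (\<forall>k l. k \<le> l \<longrightarrow> nonneg_coeffs2 (x k * y l - x (k - 1) * y (l + 1)))"

abbreviation strongly_log_concave :: "(int \<Rightarrow> int poly poly) \<Rightarrow> bool" where
  "strongly_log_concave x \<equiv> strongly_log_concave_pair x x"

definition pf2 :: "(int \<Rightarrow> int poly poly) \<Rightarrow> bool" where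
  "pf2 w \<longleftrightarrow> (\<forall>r1 r2 c1 c2. r1 < r2 \<longrightarrow> c1 < c2 \<longrightarrow>
     nonneg_coeffs2 (w (r1 - c1) * w (r2 - c2) - w (r1 - c2) * w (r2 - c1)))"

lemma strongly_log_concave_pair_seq_conv:
  assumes x0: "\<And>i. i < 0 \<Longrightarrow> x i = 0" and w0: "\<And>i. i < 0 \<Longrightarrow> w i = 0"
    and w: "\<And>c. nonneg_coeffs2 (w c)" and xy: "strongly_log_concave_pair x y"
  shows "strongly_log_concave_pair (seq_conv x w) y"
  unfolding strongly_log_concave_pair_def
proof (intro allI impI)
  fix k l :: int assume "k \<le> l"
  let ?N = "\<bar>k\<bar>"
  have "seq_conv x w k = (\<Sum>c\<in>{0..?N}. x (k - c) * w c)"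
    and "seq_conv x w (k - 1) = (\<Sum>c\<in>{0..?N}. x (k - 1 - c) * w c)"
    by (rule seq_conv_eq_sum_reflected; use x0 w0 in simp)+
  then have "seq_conv x w k * y l - seq_conv x w (k - 1) * y (l + 1)
      = (\<Sum>c\<in>{0..?N}. x (k - c) * w c * y l - x (k - 1 - c) * w c * y (l + 1))"
    by (simp add: sum_distrib_right sum_subtractf)
  also have "\<dots> = (\<Sum>c\<in>{0..?N}. w c * (x (k - c) * y l - x (k - c - 1) * y (l + 1)))"
    by (rule sum.cong) (simp_all add: algebra_simps)
  finally have diff: "seq_conv x w k * y l - seq_conv x w (k - 1) * y (l + 1)
      = (\<Sum>c\<in>{0..?N}. w c * (x (k - c) * y l - x (k - c - 1) * y (l + 1)))" .
  have "nonneg_coeffs2 (x (k - c) * y l - x (k - c - 1) * y (l + 1))" if "0 \<le> c" for c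
    using xy \<open>k \<le> l\<close> that by (simp add: strongly_log_concave_pair_def)
  then show "nonneg_coeffs2 (seq_conv x w k * y l - seq_conv x w (k - 1) * y (l + 1))"
    unfolding diff by (auto intro!: nonneg_coeffs2_sum nonneg_coeffs2_mult w)
qed

lemma seq_conv_minor_double:
  fixes f w :: "int \<Rightarrow> 'a::comm_ring_1"
  assumes f0: "\<And>i. i < 0 \<Longrightarrow> f i = 0" and w0: "\<And>i. i < 0 \<Longrightarrow> w i = 0" and "h \<le> l"
  shows "2 * (seq_conv f w h * seq_conv f w l - seq_conv f w (h - 1) * seq_conv f w (l + 1))
       = (\<Sum>i\<in>{0..\<bar>l\<bar> + 1}. \<Sum>j\<in>{0..\<bar>l\<bar> + 1}.
            (f i * f (j - 1) - f j * f (i - 1))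
            * (w (h - i) * w (l + 1 - j) - w (h - j) * w (l + 1 - i)))"
proof -
  define I where "I = {0..\<bar>l\<bar> + 1}"
  have conv: "seq_conv f w x = (\<Sum>i\<in>I. f i * w (x - i))" if "x \<le> l + 1" for x
    using that by (intro seq_conv_eq_sum) (auto simp: I_def f0 w0)
  \<comment> \<open>Shifting the index of the factors at \<open>l\<close> and \<open>h - 1\<close> by one puts all four
    convolutions in the shape required by the Binet--Cauchy identity.\<close>
  have conv_shifted: "seq_conv f w x = (\<Sum>j\<in>I. f (j - 1) * w (x + 1 - j))" if "x \<le> l" for x
  proof -
    have "seq_conv f w x = (\<Sum>i\<in>(\<lambda>j. j - 1) ` I. f i * w (x - i))"
      using that
      by (intro seq_conv_eq_sum) (auto simp: I_def f0 w0 intro!: image_eqI[where x = "i + 1" for i])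
    also have "\<dots> = (\<Sum>j\<in>I. f (j - 1) * w (x + 1 - j))"
      by (subst sum.reindex) (auto simp: inj_on_def algebra_simps)
    finally show ?thesis .
  qed
  have "seq_conv f w h * seq_conv f w l - seq_conv f w (h - 1) * seq_conv f w (l + 1)
      = (\<Sum>i\<in>I. f i * w (h - i)) * (\<Sum>j\<in>I. f (j - 1) * w (l + 1 - j))
        - (\<Sum>j\<in>I. f (j - 1) * w (h - j)) * (\<Sum>i\<in>I. f i * w (l + 1 - i))"
    using \<open>h \<le> l\<close> conv[of h] conv[of "l + 1"] conv_shifted[of l] conv_shifted[of "h - 1"]
    by simp
  then show ?thesis
    unfolding I_def by (simp only: binet_cauchy_double)
qed

lemma strongly_log_concave_seq_conv:
  assumes f0: "\<And>i. i < 0 \<Longrightarrow> f i = 0" and w0: "\<And>i. i < 0 \<Longrightarrow> w i = 0"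
    and f: "strongly_log_concave f" and w: "pf2 w"
  shows "strongly_log_concave (seq_conv f w)"
  unfolding strongly_log_concave_pair_def
proof (intro allI impI)
  fix h l :: int assume "h \<le> l"
  let ?F = "seq_conv f w"
  define summand where "summand i j =
    (f i * f (j - 1) - f j * f (i - 1)) * (w (h - i) * w (l + 1 - j) - w (h - j) * w (l + 1 - i))"
    for i j
  have summand_lt: "nonneg_coeffs2 (summand i j)" if "i < j" for i j
  proof -
    have "nonneg_coeffs2 (f i * f (j - 1) - f (i - 1) * f (j - 1 + 1))"
      using f that unfolding strongly_log_concave_pair_def by (meson zle_diff1_eq)
    then have "nonneg_coeffs2 (f i * f (j - 1) - f j * f (i - 1))"
      by (simp add: mult.commute)
    moreover have "nonneg_coeffs2 (w (h - i) * w (l + 1 - j) - w (h - j) * w (l + 1 - i))"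
      using w that \<open>h \<le> l\<close> unfolding pf2_def by simp
    ultimately show ?thesis
      unfolding summand_def by (rule nonneg_coeffs2_mult)
  qed
  have "nonneg_coeffs2 (summand i j)" for i j
  proof (cases i j rule: linorder_cases)
    case less
    then show ?thesis by (rule summand_lt)
  next
    case equal
    then show ?thesis by (simp add: summand_def)
  next
    case greater
    moreover have "summand i j = summand j i"
      by (simp add: summand_def algebra_simps)
    ultimately show ?thesis
      using summand_lt by simp
  qed
  moreover have "2 * (?F h * ?F l - ?F (h - 1) * ?F (l + 1))
      = (\<Sum>i\<in>{0..\<bar>l\<bar> + 1}. \<Sum>j\<in>{0..\<bar>l\<bar> + 1}. summand i j)"
    unfolding summand_def by (rule seq_conv_minor_double[OF f0 w0 \<open>h \<le> l\<close>])
  ultimately have "nonneg_coeffs2 (2 * (?F h * ?F l - ?F (h - 1) * ?F (l + 1)))"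
    by (simp add: nonneg_coeffs2_sum)
  then show "nonneg_coeffs2 (?F h * ?F l - ?F (h - 1) * ?F (l + 1))"
    by (rule nonneg_coeffs2_half)
qed

definition op_weight :: "nat multiset \<times> nat set \<Rightarrow> int poly poly" where
  "op_weight x = q_var ^ sum_mset (fst x) * t_var ^ card (snd x)"

lemma finite_overpartitions: "finite (overpartitions m b)"
proof (rule finite_subset)
  show "overpartitions m b \<subseteq> (\<Union>s\<le>b. multisets_of_size {0..m} s) \<times> Pow {0..m}"
    by (auto simp: overpartitions_def multisets_of_size_def)
qed auto

lemma over_gauss_eq_sum_op_weight:
  "over_gauss (m + b) b = (\<Sum>x\<in>overpartitions m b. op_weight x)"
  by (simp add: over_gauss_def op_weight_def case_prod_beta monom_monom_eq_q_t_power)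

lemma overpartitions_0: "overpartitions 0 b = {({#}, {})}"
  by (auto simp: overpartitions_def multiset_eq_iff) (metis count_eq_zero_iff less_irrefl)

lemma over_gauss_0: "over_gauss b b = 1"
  using over_gauss_eq_sum_op_weight[of 0 b] by (simp add: overpartitions_0 op_weight_def)

definition part_weight :: "nat \<Rightarrow> nat \<Rightarrow> int poly poly" where
  "part_weight M c = (if c = 0 then 1 else (1 + t_var) * q_var ^ (c * M))"

lemma mset_eq_filter_neq_plus_replicate:
  "lam = filter_mset (\<lambda>x. x \<noteq> a) lam + replicate_mset (count lam a) a"
  by (metis filter_eq_replicate_mset multiset_partition add.commute)

text \<open>The flag \<open>e\<close> says whether the last of the \<open>c\<close> added copies of \<open>M\<close> is overlined,
which is possible only when \<open>c > 0\<close>.\<close>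

definition add_largest_parts ::
    "nat \<Rightarrow> nat \<Rightarrow> bool \<times> nat multiset \<times> nat set \<Rightarrow> nat multiset \<times> nat set" where
  "add_largest_parts M c = (\<lambda>(e, mu, S). (mu + replicate_mset c M, if e then insert M S else S))"

definition remove_largest_parts ::
    "nat \<Rightarrow> nat multiset \<times> nat set \<Rightarrow> bool \<times> nat multiset \<times> nat set" where
  "remove_largest_parts M = (\<lambda>(lam, S). (M \<in> S, filter_mset (\<lambda>x. x \<noteq> M) lam, S - {M}))"

lemma bij_betw_add_largest_parts:
  assumes "c \<le> b"
  shows "bij_betw (add_largest_parts (Suc m) c)
           ((if c = 0 then {False} else UNIV) \<times> overpartitions m (b - c))
           {x \<in> overpartitions (Suc m) b. count (fst x) (Suc m) = c}"
    (is "bij_betw ?add ?A ?B")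
proof -
  let ?remove = "remove_largest_parts (Suc m)"
  have add_inv: "?remove (?add z) = z \<and> ?add z \<in> ?B" if "z \<in> ?A" for z
  proof -
    obtain e mu S where z: "z = (e, mu, S)" and e: "e \<longrightarrow> 0 < c"
      and mu: "\<forall>p\<in>#mu. 0 < p \<and> p \<le> m"
      and size: "size mu \<le> b - c" and S: "S \<subseteq> set_mset mu"
      using \<open>z \<in> ?A\<close> by (auto simp: overpartitions_def split: if_splits)
    have notM: "Suc m \<notin># mu" "Suc m \<notin> S"
      using mu S by auto (use Suc_n_not_le_n in blast)
    moreover have "filter_mset (\<lambda>x. x \<noteq> Suc m) mu = mu"
      using notM by (auto simp: filter_mset_eq_conv)
    ultimately show ?thesis
      using mu size S e assms
      by (auto simp: z add_largest_parts_def remove_largest_parts_def overpartitions_def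
          count_eq_zero_iff)
  qed
  have remove_inv: "?add (?remove x) = x \<and> ?remove x \<in> ?A" if "x \<in> ?B" for x
  proof -
    obtain lam S where x: "x = (lam, S)" and lam: "\<forall>p\<in>#lam. 0 < p \<and> p \<le> Suc m"
      and size: "size lam \<le> b" and S: "S \<subseteq> set_mset lam" and cnt: "count lam (Suc m) = c"
      using \<open>x \<in> ?B\<close> by (auto simp: overpartitions_def)
    have split: "lam = filter_mset (\<lambda>x. x \<noteq> Suc m) lam + replicate_mset c (Suc m)"
      using mset_eq_filter_neq_plus_replicate[of lam "Suc m"] cnt by simp
    then have "size lam = size (filter_mset (\<lambda>x. x \<noteq> Suc m) lam) + c"
      by (metis size_replicate_mset size_union)
    moreover have "Suc m \<in> S \<longrightarrow> 0 < c"
      using S cnt by auto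
    ultimately show ?thesis
      using split lam size S
      by (auto simp: x add_largest_parts_def remove_largest_parts_def overpartitions_def
          le_Suc_eq insert_absorb)
  qed
  show ?thesis
    by (rule bij_betw_byWitness[where f' = ?remove]) (use add_inv remove_inv in blast)+
qed

lemma op_weight_add_largest_parts:
  assumes "y \<in> overpartitions m b"
  shows "op_weight (add_largest_parts (Suc m) c (e, y))
       = t_var ^ of_bool e * q_var ^ (c * Suc m) * op_weight y"
proof -
  obtain mu S where y: "y = (mu, S)" and "\<forall>p\<in>#mu. p \<le> m" and S: "S \<subseteq> set_mset mu"
    using assms by (auto simp: overpartitions_def)
  then have "Suc m \<notin> S" and "finite S"
    by (auto intro: finite_subset) (use Suc_n_not_le_n in blast)
  then show ?thesis
    by (simp add: y add_largest_parts_def op_weight_def power_add algebra_simps)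
qed

lemma sum_op_weight_count_largest:
  assumes "c \<le> b"
  shows "(\<Sum>x\<in>{x \<in> overpartitions (Suc m) b. count (fst x) (Suc m) = c}. op_weight x)
       = part_weight (Suc m) c * (\<Sum>y\<in>overpartitions m (b - c). op_weight y)"
proof -
  let ?flags = "if c = 0 then {False} else UNIV"
  have "(\<Sum>x\<in>{x \<in> overpartitions (Suc m) b. count (fst x) (Suc m) = c}. op_weight x)
      = (\<Sum>z\<in>?flags \<times> overpartitions m (b - c). op_weight (add_largest_parts (Suc m) c z))"
    by (rule sum.reindex_bij_betw[OF bij_betw_add_largest_parts[OF assms], symmetric])
  also have "\<dots> = (\<Sum>(e, y)\<in>?flags \<times> overpartitions m (b - c).
                      t_var ^ of_bool e * q_var ^ (c * Suc m) * op_weight y)"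
    by (rule sum.cong) (auto simp: op_weight_add_largest_parts)
  also have "\<dots> = (\<Sum>e\<in>?flags. t_var ^ of_bool e * q_var ^ (c * Suc m))
                   * (\<Sum>y\<in>overpartitions m (b - c). op_weight y)"
    by (simp add: sum_product sum.cartesian_product)
  also have "(\<Sum>e\<in>?flags. t_var ^ of_bool e * q_var ^ (c * Suc m)) = part_weight (Suc m) c"
    by (simp add: part_weight_def UNIV_bool distrib_right)
  finally show ?thesis .
qed

lemma over_gauss_Suc:
  "over_gauss (Suc m + b) b = (\<Sum>c\<le>b. part_weight (Suc m) c * over_gauss (m + (b - c)) (b - c))"
proof -
  have "over_gauss (Suc m + b) b = (\<Sum>x\<in>overpartitions (Suc m) b. op_weight x)"
    by (rule over_gauss_eq_sum_op_weight)
  also have "\<dots> = (\<Sum>c\<le>b. \<Sum>x\<in>{x \<in> overpartitions (Suc m) b. count (fst x) (Suc m) = c}. op_weight x)"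
  proof (rule sum.group[symmetric])
    show "(\<lambda>x. count (fst x) (Suc m)) ` overpartitions (Suc m) b \<subseteq> {..b}"
      by (auto simp: overpartitions_def intro: le_trans[OF count_le_size])
  qed (simp_all add: finite_overpartitions)
  also have "\<dots> = (\<Sum>c\<le>b. part_weight (Suc m) c * over_gauss (m + (b - c)) (b - c))"
    unfolding over_gauss_eq_sum_op_weight by (simp add: sum_op_weight_count_largest)
  finally show ?thesis .
qed

definition over_gauss_seq :: "nat \<Rightarrow> int \<Rightarrow> int poly poly" where
  "over_gauss_seq m = zero_ext (\<lambda>b. over_gauss (m + b) b)"

lemma over_gauss_seq_Suc:
  "over_gauss_seq (Suc m) = seq_conv (over_gauss_seq m) (zero_ext (part_weight (Suc m)))"
  unfolding over_gauss_seq_def over_gauss_Suc by (rule seq_conv_zero_ext)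

lemma nonneg_coeffs2_part_weight: "nonneg_coeffs2 (zero_ext (part_weight M) x)"
  by (auto simp: zero_ext_def part_weight_def
      intro!: nonneg_coeffs2_mult nonneg_coeffs2_add nonneg_coeffs2_power)

lemma pf2_part_weight: "pf2 (zero_ext (part_weight M))"
  unfolding pf2_def
proof (intro allI impI)
  fix r1 r2 c1 c2 :: int assume "r1 < r2" "c1 < c2"
  let ?w = "zero_ext (part_weight M)"
  have w_pos: "?w x = (1 + t_var) * q_var ^ (nat x * M)" if "0 < x" for x
    using that by (simp add: zero_ext_def part_weight_def)
  consider "r1 - c2 < 0" | "r1 - c2 = 0" | "0 < r1 - c2" by linarith
  then show "nonneg_coeffs2 (?w (r1 - c1) * ?w (r2 - c2) - ?w (r1 - c2) * ?w (r2 - c1))"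
  proof cases
    case 1
    then have "?w (r1 - c2) = 0"
      by (simp add: zero_ext_def)
    then show ?thesis
      by (simp add: nonneg_coeffs2_mult nonneg_coeffs2_part_weight)
  next
    case 2
    then have "nat (r2 - c1) = nat (r1 - c1) + nat (r2 - c2)"
      using \<open>r1 < r2\<close> \<open>c1 < c2\<close> by arith
    then have "nat (r2 - c1) * M = nat (r1 - c1) * M + nat (r2 - c2) * M"
      by (simp add: add_mult_distrib)
    then have "?w (r1 - c1) * ?w (r2 - c2) - ?w (r1 - c2) * ?w (r2 - c1)
        = (t_var + t_var ^ 2) * q_var ^ (nat (r2 - c1) * M)"
      using 2 \<open>r1 < r2\<close> \<open>c1 < c2\<close>
      by (simp add: w_pos power_add zero_ext_def part_weight_def algebra_simps power2_eq_square)
    then show ?thesis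
      by (simp add: nonneg_coeffs2_mult nonneg_coeffs2_add nonneg_coeffs2_power)
  next
    case 3
    then have "nat (r1 - c1) + nat (r2 - c2) = nat (r1 - c2) + nat (r2 - c1)"
      using \<open>r1 < r2\<close> \<open>c1 < c2\<close> by arith
    then have "nat (r1 - c1) * M + nat (r2 - c2) * M = nat (r1 - c2) * M + nat (r2 - c1) * M"
      by (simp flip: add_mult_distrib)
    then have "?w (r1 - c1) * ?w (r2 - c2) = ?w (r1 - c2) * ?w (r2 - c1)"
      using 3 \<open>r1 < r2\<close> \<open>c1 < c2\<close> by (simp add: w_pos mult_ac flip: power_add)
    then show ?thesis
      by simp
  qed
qed

lemma over_gauss_seq_neg: "i < 0 \<Longrightarrow> over_gauss_seq m i = 0"
  by (simp add: over_gauss_seq_def zero_ext_def)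

lemma strongly_log_concave_over_gauss_seq: "strongly_log_concave (over_gauss_seq m)"
proof (induction m)
  case 0
  have "over_gauss_seq 0 x = of_bool (0 \<le> x)" for x
    by (simp add: over_gauss_seq_def zero_ext_def over_gauss_0)
  then show ?case
    by (simp add: strongly_log_concave_pair_def)
next
  case (Suc m)
  then show ?case
    unfolding over_gauss_seq_Suc
    by (intro strongly_log_concave_seq_conv pf2_part_weight)
       (simp_all add: over_gauss_seq_neg zero_ext_def)
qed

lemma strongly_log_concave_pair_over_gauss_seq:
  "strongly_log_concave_pair (over_gauss_seq (b + d)) (over_gauss_seq b)"
proof (induction d)
  case 0
  then show ?case
    using strongly_log_concave_over_gauss_seq by simp
next
  case (Suc d)
  then show ?case
    unfolding add_Suc_right over_gauss_seq_Suc
    by (intro strongly_log_concave_pair_seq_conv nonneg_coeffs2_part_weight)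
       (simp_all add: over_gauss_seq_neg zero_ext_def)
qed

theorem theorem6p2:
  fixes n k l :: nat
  assumes "0 < k" and "k \<le> l" and "l < n"
  shows "nonneg_coeffs2
           (over_gauss n k * over_gauss n l
            - over_gauss (n - 1) (k - 1) * over_gauss (n + 1) (l + 1))"
proof -
  have "strongly_log_concave_pair (over_gauss_seq (n - k)) (over_gauss_seq (n - l))"
    using strongly_log_concave_pair_over_gauss_seq[of "n - l" "l - k"] assms by simp
  then have "nonneg_coeffs2 (over_gauss_seq (n - k) (int k) * over_gauss_seq (n - l) (int l)
      - over_gauss_seq (n - k) (int k - 1) * over_gauss_seq (n - l) (int l + 1))"
    using assms unfolding strongly_log_concave_pair_def by simp
  moreover have "over_gauss_seq (n - k) (int k) = over_gauss n k"
    and "over_gauss_seq (n - k) (int k - 1) = over_gauss (n - 1) (k - 1)"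
    and "over_gauss_seq (n - l) (int l) = over_gauss n l"
    and "over_gauss_seq (n - l) (int l + 1) = over_gauss (n + 1) (l + 1)"
    using assms by (simp_all add: over_gauss_seq_def zero_ext_def nat_diff_distrib nat_add_distrib)
  ultimately show ?thesis
    by simp
qed

end
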